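(* Let $(X,E,\ell)$ be a uniformly connected and deterministic edge-labelled directed graph with label alphabet $\Sigma$, and let $F\subset\Sigma^+$ be a finite, non-empty set which is relatively dense in $(X,E,\ell)$. Then $$\sup_{x,y\in X}\mathsf h(L^F_{x,y})<\mathsf h(X).$$
   Context: $\Sigma$ is a finite alphabet, $\Sigma^*$ the set of finite words (including the empty word $\epsilon$), $\Sigma^+=\Sigma^*\setminus\{\epsilon\}$, $|w|$ the length of $w$. A factor of $a_1\cdots a_n$ is a word $a_i a_{i+1}\cdots a_j$, $1\le i\le j\le n$. For a language $L\subset\Sigma^*$, its entropy is $\mathsf h(L)=\limsup_{n\to\infty}\frac1n\log|\{w\in L:|w|=n\}|$, and for finite $F\subset\Sigma^+$, $L^F=\{w\in L:\text{no }v\in F\text{ is a factor of }w\}$. $(X,E,\ell)$ is a (possibly infinite) directed graph with vertex set $X$ whose edges $e=(x,a,y)$ have initial vertex $x$, terminal vertex $y$ and label $\ell(e)=a\in\Sigma$ (multiple edges and loops allowed, but two edges with the same endpoints have distinct labels). A path is a sequence of edges $e_1\cdots e_n$ with terminal vertex of $e_i$ equal to the initial vertex of $e_{i+1}$; its label is $\ell(e_1)\cdots\ell(e_n)$; the empty path at $x$ has label $\epsilon$. $L_{x,y}$ is the set of labels of all paths from $x$ to $y$, and $\mathsf h(X)=\sup_{x,y\in X}\mathsf h(L_{x,y})$. The graph is deterministic if for every vertex $x$ and $a\in\Sigma$ there is at most one edge with initial vertex $x$ and label $a$. It is strongly connected if there is a path between any ordered pair of vertices, and uniformly connected if it is strongly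 connected and there is $K$ such that for every edge from $x$ to $y$ there is a path from $y$ to $x$ of length at most $K$. The forward distance $d^+(x,y)$ is the minimal length of a path from $x$ to $y$. $F$ is relatively dense if there is $D$ such that for every $x\in X$ there are $y\in X$ and $w\in F$ with $d^+(x,y)\le D$ and a path starting at $y$ with label $w$. *)

theory Defs
  imports Complex_Main "HOL-Library.Extended_Real" "HOL-Library.Extended_Nat"
    "HOL-Library.Liminf_Limsup" "HOL-Library.Sublist"
begin

inductive lpath :: "('v \<times> 'a \<times> 'v) set \<Rightarrow> 'v \<Rightarrow> 'a list \<Rightarrow> 'v \<Rightarrow> bool"
  for E where
  lpath_nil: "lpath E x [] x"
| lpath_cons: "(x, a, z) \<in> E \<Longrightarrow> lpath E z w y \<Longrightarrow> lpath E x (a # w) y"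

definition lang :: "('v \<times> 'a \<times> 'v) set \<Rightarrow> 'v \<Rightarrow> 'v \<Rightarrow> 'a list set" where
  "lang E x y = {w. lpath E x w y}"

definition avoiding :: "'a list set \<Rightarrow> 'a list set \<Rightarrow> 'a list set" where
  "avoiding L F = {w \<in> L. \<forall>v\<in>F. \<not> sublist v w}"

definition count_len :: "'a list set \<Rightarrow> nat \<Rightarrow> nat" where
  "count_len L n = card {w \<in> L. length w = n}"

definition entropy :: "'a list set \<Rightarrow> ereal" where
  "entropy L = limsup (\<lambda>n. if count_len L n = 0 then -\<infinity>
                           else ereal (ln (real (count_len L n)) / real n))"

definition graph_entropy :: "'v set \<Rightarrow> ('v \<times> 'a \<times> 'v) set \<Rightarrow> ereal" where
  "graph_entropy X E = (SUP p \<in> X \<times> X. entropy (lang E (fst p) (snd p)))"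

definition deterministic :: "('v \<times> 'a \<times> 'v) set \<Rightarrow> bool" where
  "deterministic E \<longleftrightarrow> (\<forall>x a y y'. (x, a, y) \<in> E \<longrightarrow> (x, a, y') \<in> E \<longrightarrow> y = y')"

definition strongly_connected :: "'v set \<Rightarrow> ('v \<times> 'a \<times> 'v) set \<Rightarrow> bool" where
  "strongly_connected X E \<longleftrightarrow> (\<forall>x\<in>X. \<forall>y\<in>X. \<exists>w. lpath E x w y)"

definition uniformly_connected :: "'v set \<Rightarrow> ('v \<times> 'a \<times> 'v) set \<Rightarrow> bool" where
  "uniformly_connected X E \<longleftrightarrow> strongly_connected X E \<and>
     (\<exists>K::nat. \<forall>x a y. (x, a, y) \<in> E \<longrightarrow> (\<exists>w. length w \<le> K \<and> lpath E y w x))"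

definition fwd_dist :: "('v \<times> 'a \<times> 'v) set \<Rightarrow> 'v \<Rightarrow> 'v \<Rightarrow> enat" where
  "fwd_dist E x y = (INF w \<in> {w. lpath E x w y}. enat (length w))"

definition relatively_dense :: "'v set \<Rightarrow> ('v \<times> 'a \<times> 'v) set \<Rightarrow> 'a list set \<Rightarrow> bool" where
  "relatively_dense X E F \<longleftrightarrow> (\<exists>D::nat. \<forall>x\<in>X. \<exists>y\<in>X. \<exists>w\<in>F.
      fwd_dist E x y \<le> enat D \<and> (\<exists>z. lpath E y w z))"

end

theory Submission
  imports Defs "HOL-Real_Asymp.Real_Asymp"
begin

text \<open>Relative density and uniform connectivity give a bound \<open>R\<close> such that every vertex \<open>u\<close>
  carries a cycle \<open>d u\<close> of length at most \<open>R\<close> containing a forbidden word. Cut an \<open>F\<close>-avoiding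
  word of length \<open>n\<close> read along a path into \<open>n div G\<close> blocks of length \<open>G = M R\<close>, and in each
  block splice in the cycle at the current vertex at one of \<open>M\<close> slots spaced \<open>R\<close> apart. The
  result is again a path word, and since the original word avoids \<open>F\<close> while the cycle does not,
  the slots and the original word can be recovered. Hence the number of avoiding words of length
  \<open>n\<close>, times \<open>M ^ (n div G)\<close>, is at most the number of path words of length between \<open>n + n/G\<close> and
  \<open>n + R n/G\<close>, roughly \<open>exp (h (n + R n/G))\<close> with \<open>h = h(X)\<close>. Taking \<open>ln M > (h + 1) R + 1\<close> pushes
  the entropy of every avoiding language below \<open>h - 1/(2G)\<close>.\<close>

lemma lpath_append: "lpath E x u z \<Longrightarrow> lpath E z v y \<Longrightarrow> lpath E x (u @ v) y"
  by (induction rule: lpath.induct) (auto intro: lpath.intros)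

lemma lpath_append_iff: "lpath E x (u @ v) y \<longleftrightarrow> (\<exists>z. lpath E x u z \<and> lpath E z v y)"
proof (induction u arbitrary: x)
  case (Cons a u)
  show ?case
  proof
    assume "lpath E x ((a # u) @ v) y"
    then obtain z where "(x, a, z) \<in> E" "lpath E z (u @ v) y"
      by (auto elim: lpath.cases)
    with Cons.IH show "\<exists>z. lpath E x (a # u) z \<and> lpath E z v y"
      by (auto intro: lpath.intros)
  qed (metis lpath_append append_Cons)
qed (auto intro: lpath.intros elim: lpath.cases)

lemma lpath_target_unique:
  assumes "deterministic E"
  shows "lpath E x w y \<Longrightarrow> lpath E x w y' \<Longrightarrow> y = y'"
proof (induction arbitrary: y' rule: lpath.induct)
  case (lpath_cons x a z w y)
  from lpath_cons.prems obtain z' where "(x, a, z') \<in> E" "lpath E z' w y'"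
    by (auto elim: lpath.cases)
  with lpath_cons assms show ?case unfolding deterministic_def by metis
qed (auto elim: lpath.cases)

lemma lpath_target_in:
  assumes "E \<subseteq> X \<times> S \<times> X"
  shows "lpath E x w y \<Longrightarrow> x \<in> X \<Longrightarrow> y \<in> X"
  by (induction rule: lpath.induct) (use assms in auto)

lemma lpath_labels_in:
  assumes "E \<subseteq> X \<times> S \<times> X"
  shows "lpath E x w y \<Longrightarrow> set w \<subseteq> S"
  by (induction rule: lpath.induct) (use assms in auto)

lemma lpath_concat_replicate: "lpath E y c y \<Longrightarrow> lpath E y (concat (replicate k c)) y"
  by (induction k) (auto intro: lpath.intros lpath_append)

lemma lpath_return_bounded:
  assumes K: "\<forall>x a y. (x, a, y) \<in> E \<longrightarrow> (\<exists>w. length w \<le> K \<and> lpath E y w x)"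
  shows "lpath E x w y \<Longrightarrow> \<exists>w'. lpath E y w' x \<and> length w' \<le> K * length w"
proof (induction rule: lpath.induct)
  case (lpath_cons x a z w y)
  then obtain w' where w': "lpath E y w' z" "length w' \<le> K * length w" by auto
  from K lpath_cons.hyps(1) obtain q where q: "length q \<le> K" "lpath E z q x" by blast
  from w' q have "lpath E y (w' @ q) x \<and> length (w' @ q) \<le> K * length (a # w)"
    by (auto intro: lpath_append)
  then show ?case by blast
qed (auto intro: lpath.intros)

lemma lpath_if_fwd_dist_le: "fwd_dist E x y \<le> enat D \<Longrightarrow> \<exists>w. lpath E x w y \<and> length w \<le> D"
proof (rule ccontr)
  assume dist: "fwd_dist E x y \<le> enat D" and "\<nexists>w. lpath E x w y \<and> length w \<le> D"
  then have "enat (Suc D) \<le> fwd_dist E x y"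
    unfolding fwd_dist_def by (auto intro!: INF_greatest)
  with dist show False
    by (metis Suc_n_not_le_n enat_ord_simps(1) order_trans)
qed

lemma finite_lang_length:
  assumes "finite S" "E \<subseteq> X \<times> S \<times> X"
  shows "finite {w \<in> lang E x y. length w = n}"
  by (rule finite_subset[OF _ finite_lists_length_eq[OF assms(1), of n]])
    (use lpath_labels_in[OF assms(2)] in \<open>auto simp: lang_def\<close>)

definition path_end :: "('v \<times> 'a \<times> 'v) set \<Rightarrow> 'v \<Rightarrow> 'a list \<Rightarrow> 'v" where
  "path_end E v w = (THE z. lpath E v w z)"

lemma path_end_eq: "deterministic E \<Longrightarrow> lpath E v w z \<Longrightarrow> path_end E v w = z"
  unfolding path_end_def using lpath_target_unique by (metis the_equality)

definition log_growth :: "(nat \<Rightarrow> nat) \<Rightarrow> nat \<Rightarrow> ereal" where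
  "log_growth f n = (if f n = 0 then -\<infinity> else ereal (ln (real (f n)) / real n))"

lemma entropy_eq_limsup_log_growth: "entropy L = limsup (log_growth (count_len L))"
  unfolding entropy_def log_growth_def ..

lemma limsup_log_growth_le:
  fixes a :: "nat \<Rightarrow> nat"
  assumes C: "0 < C" and bound: "eventually (\<lambda>n. real (a n) \<le> C * real n * exp (s * real n)) sequentially"
  shows "limsup (log_growth a) \<le> ereal s"
proof -
  define b where "b n = s + (ln C + ln (real n)) / real n" for n
  have ev: "eventually (\<lambda>n. log_growth a n \<le> ereal (b n)) sequentially"
    using bound eventually_ge_at_top[of 1]
  proof eventually_elim
    case (elim n)
    show ?case
    proof (cases "a n = 0")
      case False
      have n: "0 < real n" using elim(2) by simp
      have "ln (real (a n)) \<le> ln (C * real n * exp (s * real n))"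
        using False elim(1) by (intro ln_mono) auto
      also have "\<dots> = b n * real n"
        using C n by (simp add: b_def ln_mult field_simps)
      finally show ?thesis
        using False n by (simp add: log_growth_def divide_le_eq)
    qed (simp add: log_growth_def)
  qed
  have "(\<lambda>n. ereal (b n)) \<longlonglongrightarrow> ereal s"
    unfolding b_def lim_ereal by real_asymp
  then have "limsup (\<lambda>n. ereal (b n)) = ereal s"
    by (simp add: lim_imp_Limsup)
  with Limsup_mono[OF ev] show ?thesis
    by simp
qed

lemma eventually_le_exp_if_limsup_log_growth_less:
  fixes c :: "nat \<Rightarrow> nat"
  assumes "limsup (log_growth c) < ereal s"
  shows "eventually (\<lambda>n. real (c n) \<le> exp (s * real n)) sequentially"
  using Limsup_lessD[OF assms] eventually_ge_at_top[of 1]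
proof eventually_elim
  case (elim n)
  show ?case
  proof (cases "c n = 0")
    case False
    then have "ln (real (c n)) < s * real n"
      using elim by (simp add: log_growth_def divide_less_eq mult.commute)
    then show ?thesis
      using False by (metis exp_less_mono exp_ln less_imp_le of_nat_0_less_iff gr0I)
  qed simp
qed

lemma le_exp_if_power_mult_le_sum:
  fixes a c :: "nat \<Rightarrow> nat" and s :: real
  assumes s: "0 \<le> s" and M: "s * T + 1 \<le> ln (real M)" and G: "0 < G" and n: "1 \<le> n"
    and c: "\<And>j. n \<le> j \<Longrightarrow> real (c j) \<le> exp (s * real j)"
    and bound: "real (a n) * real M ^ (n div G)
                  \<le> (\<Sum>j\<in>{n + n div G .. n + T * (n div G)}. real (c j))"
  shows "real (a n) \<le> exp 1 * (T + 1) * real n * exp ((s - 1 / real G) * real n)"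
proof -
  define i where "i = n div G"
  have "i \<le> n" by (simp add: i_def)
  have "0 < real M"
  proof (rule ccontr)
    assume "\<not> 0 < real M"
    with M have "s * T + 1 \<le> 0" by simp
    with s show False by (smt (verit) mult_nonneg_nonneg of_nat_0_le_iff)
  qed
  with M have "exp (s * T + 1) \<le> real M"
    by (simp add: ln_ge_iff)
  then have "exp (real i * (s * T + 1)) \<le> real M ^ i"
    by (simp add: exp_of_nat_mult power_mono)
  then have "real (a n) * exp (real i * (s * T + 1)) \<le> real (a n) * real M ^ i"
    by (simp add: mult_left_mono)
  also have "\<dots> \<le> (\<Sum>j\<in>{n + i .. n + T * i}. real (c j))"
    using bound unfolding i_def .
  also have "\<dots> \<le> (\<Sum>j\<in>{n + i .. n + T * i}. exp (s * (n + T * i)))"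
    using s by (intro sum_mono order_trans[OF c])
      (auto intro!: mult_left_mono simp flip: of_nat_mult of_nat_add)
  also have "\<dots> \<le> (real T * n + 1) * exp (s * (n + T * i))"
  proof -
    have "T * i \<le> T * n" using \<open>i \<le> n\<close> by simp
    then have "card {n + i .. n + T * i} \<le> T * n + 1" by (simp only: card_atLeastAtMost)
    then show ?thesis by (simp add: mult_right_mono flip: of_nat_mult of_nat_Suc)
  qed
  also have "\<dots> \<le> (real T + 1) * n * exp (s * (n + T * i))"
    using n by (intro mult_right_mono) (auto simp: algebra_simps)
  also have "\<dots> = (real T + 1) * n * exp (s * n - i) * exp (real i * (s * T + 1))"
    by (simp add: algebra_simps flip: exp_add)
  finally have a: "real (a n) \<le> (real T + 1) * n * exp (s * n - i)"
    by simp
  have "n < G + i * G"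
    using dividend_less_div_times[OF G] unfolding i_def .
  then have "real n / real G < real i + 1"
    using G by (simp add: pos_divide_less_eq algebra_simps flip: of_nat_mult of_nat_add)
  then have "exp (s * n - i) \<le> exp 1 * exp ((s - 1 / real G) * n)"
    by (simp add: algebra_simps flip: exp_add)
  then have "(real T + 1) * n * exp (s * n - i) \<le> (real T + 1) * n * (exp 1 * exp ((s - 1 / real G) * n))"
    by (rule mult_left_mono) simp
  with a show ?thesis
    by (simp add: ac_simps)
qed

lemma limsup_log_growth_gap:
  fixes a c :: "nat \<Rightarrow> nat" and r :: real
  assumes r: "0 \<le> r" and c: "limsup (log_growth c) \<le> ereal r"
    and G: "G = M * T" "0 < G" and M: "(r + 1) * T + 1 \<le> ln (real M)"
    and bound: "\<And>n. real (a n) * real M ^ (n div G)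
                  \<le> (\<Sum>j\<in>{n + n div G .. n + T * (n div G)}. real (c j))"
  shows "limsup (log_growth a) \<le> ereal (r - 1 / (2 * real G))"
proof -
  define \<delta> where "\<delta> = 1 / (2 * real G)"
  have \<delta>: "0 < \<delta>" "\<delta> \<le> 1" using G(2) by (auto simp: \<delta>_def field_simps)
  have "limsup (log_growth c) < ereal (r + \<delta>)"
    using c \<delta> by (simp add: le_less_trans)
  then obtain N where N: "\<And>j. N \<le> j \<Longrightarrow> real (c j) \<le> exp ((r + \<delta>) * real j)"
    using eventually_le_exp_if_limsup_log_growth_less unfolding eventually_sequentially by blast
  have "(r + \<delta>) * T + 1 \<le> ln (real M)"
    using M \<delta> by (smt (verit) mult_right_mono of_nat_0_le_iff)
  then have "real (a n) \<le> exp 1 * (T + 1) * real n * exp ((r - \<delta>) * real n)" if "max N 1 \<le> n" for n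
    using le_exp_if_power_mult_le_sum[of "r + \<delta>" T M G n c a] that r \<delta> G(2) N bound
    by (simp add: \<delta>_def add.commute)
  then have "limsup (log_growth a) \<le> ereal (r - \<delta>)"
    by (intro limsup_log_growth_le[of "exp 1 * (T + 1)"])
      (auto simp: add_pos_nonneg eventually_sequentially intro: exI[of _ "max N 1"])
  then show ?thesis by (simp add: \<delta>_def)
qed

lemma entropy_lang_le_ln_card:
  assumes S: "finite S" "S \<noteq> {}" and E: "E \<subseteq> X \<times> S \<times> X"
  shows "entropy (lang E x y) \<le> ereal (ln (card S))"
  unfolding entropy_eq_limsup_log_growth
proof (rule limsup_log_growth_le)
  have bound: "real (count_len (lang E x y) n) \<le> 1 * real n * exp (ln (card S) * real n)"
    if "1 \<le> n" for n
  proof -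
    have "count_len (lang E x y) n \<le> card {xs. set xs \<subseteq> S \<and> length xs = n}"
      unfolding count_len_def using lpath_labels_in[OF E]
      by (intro card_mono[OF finite_lists_length_eq[OF S(1)]]) (auto simp: lang_def)
    also have "\<dots> = card S ^ n"
      by (rule card_lists_length_eq[OF S(1)])
    finally have "real (count_len (lang E x y) n) \<le> exp (ln (card S) * real n)"
      using S by (simp add: card_gt_0_iff exp_of_nat_mult mult.commute flip: of_nat_power)
    also have "\<dots> \<le> 1 * real n * exp (ln (card S) * real n)"
      using that by simp
    finally show ?thesis .
  qed
  then show "eventually (\<lambda>n. real (count_len (lang E x y) n) \<le> 1 * real n * exp (ln (card S) * real n))
      sequentially"
    unfolding eventually_sequentially using bound by blast
qed simp

lemma entropy_nonneg_if_frequently: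
  assumes "frequently (\<lambda>n. count_len L n \<noteq> 0) sequentially"
  shows "0 \<le> entropy L"
proof (rule ccontr)
  assume "\<not> 0 \<le> entropy L"
  then have "eventually (\<lambda>n. log_growth (count_len L) n < ereal 0) sequentially"
    by (intro Limsup_lessD) (simp add: entropy_eq_limsup_log_growth zero_ereal_def)
  with assms obtain n where n: "count_len L n \<noteq> 0" "log_growth (count_len L) n < ereal 0"
    by (metis (mono_tags, lifting) frequently_eventually_frequently frequentlyE)
  have "0 \<le> ln (real (count_len L n)) / real n"
    using n(1) by (intro divide_nonneg_nonneg ln_ge_zero) auto
  with n show False
    by (simp add: log_growth_def)
qed

lemma entropy_lang_cycle_nonneg:
  assumes "finite S" "E \<subseteq> X \<times> S \<times> X" and cycle: "lpath E y c y" "c \<noteq> []"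
  shows "0 \<le> entropy (lang E y y)"
proof (rule entropy_nonneg_if_frequently)
  show "frequently (\<lambda>n. count_len (lang E y y) n \<noteq> 0) sequentially"
    unfolding frequently_sequentially
  proof
    fix N
    define n where "n = Suc N * length c"
    have "concat (replicate (Suc N) c) \<in> {w \<in> lang E y y. length w = n}"
      using lpath_concat_replicate[OF cycle(1), of "Suc N"]
      by (simp add: lang_def n_def length_concat sum_list_replicate)
    then have "count_len (lang E y y) n \<noteq> 0"
      unfolding count_len_def using finite_lang_length[OF assms(1,2)]
      by (metis card_0_eq empty_iff)
    moreover have "N \<le> n" using cycle(2) by (cases c) (auto simp: n_def)
    ultimately show "\<exists>n\<ge>N. count_len (lang E y y) n \<noteq> 0" by blast
  qed
qed

fun insert_detours :: "('v \<times> 'a \<times> 'v) set \<Rightarrow> ('v \<Rightarrow> 'a list) \<Rightarrow> nat \<Rightarrow> nat \<Rightarrow> 'v \<Rightarrow>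
    nat list \<Rightarrow> 'a list \<Rightarrow> 'a list" where
  "insert_detours E d T G v [] w = w"
| "insert_detours E d T G v (j # js) w =
     take (j * T) w @ d (path_end E v (take (j * T) w)) @ drop (j * T) (take G w)
     @ insert_detours E d T G (path_end E v (take G w)) js (drop G w)"

text \<open>The cycle spliced in at slot \<open>j\<close> would lie in the stretch of \<open>w'\<close> before slot \<open>j'\<close>,
  which avoids \<open>F\<close>.\<close>

lemma earlier_detour_slot_impossible:
  assumes "j < j'" "j' < M" "G = M * T" "G \<le> length w" "G \<le> length w'"
    and "length d \<le> T" "f \<in> F" "sublist f d" "\<forall>f\<in>F. \<not> sublist f w'"
    and "take (j * T) w @ d @ u = take (j' * T) w' @ u'"
  shows False
proof -
  have jT: "j * T + T \<le> j' * T" using assms(1)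
    by (metis Suc_leI add.commute mult_Suc mult_le_mono1)
  have j'G: "j' * T \<le> G" using assms(2,3) by simp
  define z where "z = drop (j * T) (take (j' * T) w')"
  have "take (j' * T) w' = take (j * T) w' @ z"
    unfolding z_def using jT by (metis append_take_drop_id le_add1 min_def order_trans take_take)
  moreover have "length (take (j * T) w) = length (take (j * T) w')"
    using jT j'G assms(4,5) by simp
  ultimately have "d @ u = z @ u'"
    using assms(10) by (simp add: append_eq_append_conv)
  then have "take (length d) (d @ u) = take (length d) (z @ u')"
    by simp
  moreover have "T \<le> length z" unfolding z_def using jT j'G assms(5) by simp
  ultimately have "d = take (length d) z"
    using assms(6) by simp
  then have "sublist d z"
    by (metis sublist_take)
  moreover have "sublist z w'"
    unfolding z_def by (meson sublist_drop sublist_take sublist_order.order.trans)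
  ultimately show False
    using assms(7-9) by (meson sublist_order.order.trans)
qed

lemma detour_slot_unique:
  assumes "j < M" "j' < M" "G = M * T" "G \<le> length w" "G \<le> length w'"
    and "length d \<le> T" "length d' \<le> T" "\<exists>f\<in>F. sublist f d" "\<exists>f\<in>F. sublist f d'"
    and "\<forall>f\<in>F. \<not> sublist f w" "\<forall>f\<in>F. \<not> sublist f w'"
    and "take (j * T) w @ d @ u = take (j' * T) w' @ d' @ u'"
  shows "j = j'"
proof (rule ccontr)
  assume "j \<noteq> j'"
  then consider "j < j'" | "j' < j" by linarith
  then show False
  proof cases
    case 1
    with assms show False
      using earlier_detour_slot_impossible[of j j' M G T w w' d] by blast
  next
    case 2
    with assms show False
      using earlier_detour_slot_impossible[of j' j M G T w' w d'] by (metis (no_types))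
  qed
qed

lemma insert_detours_inj:
  assumes d: "\<forall>u. \<exists>f\<in>F. sublist f (d u)" "\<forall>u. length (d u) \<le> T" and G: "G = M * T"
  shows "insert_detours E d T G v js w = insert_detours E d T G v js' w' \<Longrightarrow>
    length js = length js' \<Longrightarrow> set js \<subseteq> {..<M} \<Longrightarrow> set js' \<subseteq> {..<M} \<Longrightarrow>
    G * length js \<le> length w \<Longrightarrow> G * length js' \<le> length w' \<Longrightarrow>
    \<forall>f\<in>F. \<not> sublist f w \<Longrightarrow> \<forall>f\<in>F. \<not> sublist f w' \<Longrightarrow> js = js' \<and> w = w'"
proof (induction js arbitrary: v js' w w')
  case (Cons j js)
  then obtain j' js'' where js': "js' = j' # js''" by (cases js') auto
  have lw: "G \<le> length w" "G \<le> length w'" using Cons.prems(5,6) js' by auto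
  have jM: "j < M" "j' < M" using Cons.prems(3,4) js' by auto
  define rest where "rest = drop (j * T) (take G w)
    @ insert_detours E d T G (path_end E v (take G w)) js (drop G w)"
  define rest' where "rest' = drop (j' * T) (take G w')
    @ insert_detours E d T G (path_end E v (take G w')) js'' (drop G w')"
  have eq: "take (j * T) w @ d (path_end E v (take (j * T) w)) @ rest
      = take (j' * T) w' @ d (path_end E v (take (j' * T) w')) @ rest'"
    using Cons.prems(1) js' by (simp add: rest_def rest'_def)
  have jj: "j = j'"
    using detour_slot_unique[OF jM G lw _ _ _ _ Cons.prems(7,8) eq] d by blast
  have jG: "j * T \<le> G" using jM G by simp
  have head: "take (j * T) w = take (j * T) w'"
    using eq jj jG lw by (simp add: append_eq_append_conv)
  with eq jj have "rest = rest'" by simp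
  moreover have "length (drop (j * T) (take G w)) = length (drop (j * T) (take G w'))"
    using lw by simp
  ultimately have mid: "drop (j * T) (take G w) = drop (j * T) (take G w')"
    and tail: "insert_detours E d T G (path_end E v (take G w)) js (drop G w)
             = insert_detours E d T G (path_end E v (take G w')) js'' (drop G w')"
    unfolding rest_def rest'_def jj by (auto simp: append_eq_append_conv)
  have block: "take G w = take G w'"
    by (metis append_take_drop_id jG mid head take_take min_absorb1)
  have "js = js'' \<and> drop G w = drop G w'"
    using Cons.prems js' by (intro Cons.IH[OF tail[unfolded block]])
      (auto simp: G dest: sublist_order.order.trans[OF _ sublist_drop])
  with jj block js' show ?case by (metis append_take_drop_id)
qed simp

lemma length_insert_detours:
  assumes d: "\<forall>u. 1 \<le> length (d u)" "\<forall>u. length (d u) \<le> T" and G: "G = M * T"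
  shows "set js \<subseteq> {..<M} \<Longrightarrow> G * length js \<le> length w \<Longrightarrow>
    length w + length js \<le> length (insert_detours E d T G v js w)
    \<and> length (insert_detours E d T G v js w) \<le> length w + T * length js"
proof (induction js arbitrary: v w)
  case (Cons j js)
  have jG: "j * T \<le> G" using Cons.prems G by simp
  have lw: "G \<le> length w" using Cons.prems by simp
  have "length (drop G w) + length js \<le> length (insert_detours E d T G (path_end E v (take G w)) js (drop G w))
    \<and> length (insert_detours E d T G (path_end E v (take G w)) js (drop G w)) \<le> length (drop G w) + T * length js"
    using Cons.prems by (intro Cons.IH) auto
  moreover have "length (take (j * T) w) + length (drop (j * T) (take G w)) = G"
    using jG lw by simp
  moreover have "1 \<le> length (d (path_end E v (take (j * T) w)))"
    "length (d (path_end E v (take (j * T) w))) \<le> T"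
    using d by auto
  ultimately show ?case using lw
    by (simp only: insert_detours.simps length_append length_Cons length_drop mult_Suc_right) linarith
qed simp

lemma lpath_insert_detours:
  assumes det: "deterministic E" and E: "E \<subseteq> X \<times> S \<times> X" and d: "\<forall>u\<in>X. lpath E u (d u) u"
    and G: "G = M * T"
  shows "lpath E v w y \<Longrightarrow> v \<in> X \<Longrightarrow> set js \<subseteq> {..<M} \<Longrightarrow> G * length js \<le> length w \<Longrightarrow>
    lpath E v (insert_detours E d T G v js w) y"
proof (induction js arbitrary: v w)
  case (Cons j js)
  have jG: "j * T \<le> G" using Cons.prems G by simp
  have "w = take (j * T) w @ drop (j * T) (take G w) @ drop G w"
    using jG by (metis append.assoc append_take_drop_id min_absorb1 take_take)
  then obtain z1 z2 where z: "lpath E v (take (j * T) w) z1" "lpath E z1 (drop (j * T) (take G w)) z2"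
      "lpath E z2 (drop G w) y"
    using Cons.prems(1) by (metis lpath_append_iff)
  have "take G w = take (j * T) w @ drop (j * T) (take G w)"
    using jG by (metis append_take_drop_id min_absorb1 take_take)
  then have "lpath E v (take G w) z2"
    using lpath_append[OF z(1,2)] by simp
  then have ends: "path_end E v (take (j * T) w) = z1" "path_end E v (take G w) = z2"
    using z(1) by (simp_all add: path_end_eq[OF det])
  have "z1 \<in> X" "z2 \<in> X"
    using z Cons.prems(2) lpath_target_in[OF E] by blast+
  then have "lpath E z2 (insert_detours E d T G z2 js (drop G w)) y"
    using Cons.prems z(3) by (intro Cons.IH) auto
  moreover have "lpath E z1 (d z1) z1"
    using d \<open>z1 \<in> X\<close> by blast
  ultimately show ?case
    unfolding insert_detours.simps ends using z(1,2) by (metis lpath_append)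
qed simp

lemma count_avoiding_mult_power_le:
  assumes S: "finite S" and E: "E \<subseteq> X \<times> S \<times> X" and det: "deterministic E" and x: "x \<in> X"
    and d: "\<forall>u\<in>X. lpath E u (d u) u" "\<forall>u. \<exists>f\<in>F. sublist f (d u)"
      "\<forall>u. 1 \<le> length (d u)" "\<forall>u. length (d u) \<le> T"
    and G: "G = M * T"
  shows "real (count_len (avoiding (lang E x y) F) n) * real M ^ (n div G)
     \<le> (\<Sum>j\<in>{n + n div G .. n + T * (n div G)}. real (count_len (lang E x y) j))"
proof -
  define i where "i = n div G"
  define A where "A = {w \<in> avoiding (lang E x y) F. length w = n}"
  define Js where "Js = {js. set js \<subseteq> {..<M} \<and> length js = i}"
  define B where "B = (\<Union>j\<in>{n + i .. n + T * i}. {u \<in> lang E x y. length u = j})"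
  define \<phi> where "\<phi> = (\<lambda>(w, js). insert_detours E d T G x js w)"
  have Gi: "G * i \<le> n" unfolding i_def by (metis div_times_less_eq_dividend mult.commute)
  have "inj_on \<phi> (A \<times> Js)"
  proof (rule inj_onI)
    fix p q assume p: "p \<in> A \<times> Js" and q: "q \<in> A \<times> Js" and eq: "\<phi> p = \<phi> q"
    obtain w js w' js' where pq: "p = (w, js)" "q = (w', js')" by fastforce
    have "js = js' \<and> w = w'"
    proof (rule insert_detours_inj[OF d(2,4) G])
      show "insert_detours E d T G x js w = insert_detours E d T G x js' w'"
        using eq by (simp add: pq \<phi>_def)
    qed (use p q Gi in \<open>auto simp: pq A_def Js_def avoiding_def\<close>)
    with pq show "p = q" by simp
  qed
  moreover have "\<phi> ` (A \<times> Js) \<subseteq> B"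
  proof (rule image_subsetI, clarify)
    fix w js assume "w \<in> A" and js: "js \<in> Js"
    then have w: "lpath E x w y" "length w = n"
      unfolding A_def avoiding_def lang_def by auto
    have js: "set js \<subseteq> {..<M}" "G * length js \<le> length w" "length js = i"
      using js Gi w(2) by (auto simp: Js_def)
    have "lpath E x (insert_detours E d T G x js w) y"
      using lpath_insert_detours[OF det E d(1) G w(1) x js(1,2)] .
    moreover have "n + i \<le> length (insert_detours E d T G x js w)"
      "length (insert_detours E d T G x js w) \<le> n + T * i"
      using length_insert_detours[OF d(3,4) G js(1,2), of E x] js(3) w(2) by auto
    ultimately show "\<phi> (w, js) \<in> B"
      unfolding B_def lang_def \<phi>_def by auto
  qed
  moreover have "finite B"
    unfolding B_def using finite_lang_length[OF S E] by auto
  ultimately have "card A * M ^ i \<le> card B"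
    using card_inj_on_le[of \<phi> "A \<times> Js" B] card_lists_length_eq[of "{..<M}" i]
    by (simp add: Js_def card_cartesian_product)
  also have "\<dots> \<le> (\<Sum>j\<in>{n + i .. n + T * i}. count_len (lang E x y) j)"
    unfolding B_def count_len_def by (rule card_UN_le) simp
  finally show ?thesis
    unfolding A_def i_def count_len_def by (simp flip: of_nat_power of_nat_mult of_nat_sum)
qed

lemma short_cycle_through_forbidden_word:
  assumes K: "\<forall>x a y. (x, a, y) \<in> E \<longrightarrow> (\<exists>w. length w \<le> K \<and> lpath E y w x)"
    and D: "\<forall>x\<in>X. \<exists>y\<in>X. \<exists>f\<in>F. fwd_dist E x y \<le> enat D \<and> (\<exists>z. lpath E y f z)"
    and m: "\<forall>f\<in>F. length f \<le> m" and u: "u \<in> X"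
  obtains c f where "lpath E u c u" "f \<in> F" "sublist f c" "length c \<le> (D + m) * (K + 1)"
proof -
  from D u obtain y f z where y: "f \<in> F" "fwd_dist E u y \<le> enat D" "lpath E y f z" by blast
  obtain p where p: "lpath E u p y" "length p \<le> D"
    using lpath_if_fwd_dist_le[OF y(2)] by blast
  have pf: "lpath E u (p @ f) z" using lpath_append p(1) y(3) by metis
  obtain q where q: "lpath E z q u" "length q \<le> K * length (p @ f)"
    using lpath_return_bounded[OF K pf] by blast
  have "length ((p @ f) @ q) \<le> length (p @ f) * (K + 1)"
    using q(2) by (simp add: algebra_simps)
  also have "\<dots> \<le> (D + m) * (K + 1)"
    using p(2) m y(1) by (intro mult_right_mono) (auto intro: add_mono)
  finally show ?thesis
    using that[OF lpath_append[OF pf q(1)] y(1)] by (metis sublist_appendI append.assoc)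
qed

lemma detour_cycles_exist:
  assumes "uniformly_connected X E" "relatively_dense X E F"
    and "finite F" "F \<noteq> {}" "\<forall>f\<in>F. f \<noteq> []"
  obtains d :: "'v \<Rightarrow> 'a list" and R where "\<forall>u\<in>X. lpath E u (d u) u"
    "\<forall>u. \<exists>f\<in>F. sublist f (d u)" "\<forall>u. 1 \<le> length (d u)" "\<forall>u. length (d u) \<le> R"
proof -
  obtain K where K: "\<forall>x a y. (x, a, y) \<in> E \<longrightarrow> (\<exists>w. length w \<le> K \<and> lpath E y w x)"
    using assms(1) unfolding uniformly_connected_def by blast
  obtain D where D: "\<forall>x\<in>X. \<exists>y\<in>X. \<exists>f\<in>F. fwd_dist E x y \<le> enat D \<and> (\<exists>z. lpath E y f z)"
    using assms(2) unfolding relatively_dense_def by blast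
  define m where "m = Max (length ` F)"
  have m: "\<forall>f\<in>F. length f \<le> m" "\<forall>f\<in>F. 1 \<le> length f"
    using assms(3,5) by (auto simp: m_def Suc_le_eq)
  define R where "R = (D + m) * (K + 1)"
  \<comment> \<open>outside \<open>X\<close> only the length and the forbidden factor matter, so that \<open>d\<close> can be total\<close>
  define good where "good u c \<longleftrightarrow> (\<exists>f\<in>F. sublist f c) \<and> 1 \<le> length c \<and> length c \<le> R
    \<and> (u \<in> X \<longrightarrow> lpath E u c u)" for u c
  have "\<exists>c. good u c" for u
  proof (cases "u \<in> X")
    case True
    then obtain c f where "lpath E u c u" "f \<in> F" "sublist f c" "length c \<le> R"
      using short_cycle_through_forbidden_word[OF K D m(1)] unfolding R_def by blast
    moreover have "1 \<le> length c"
      using \<open>f \<in> F\<close> \<open>sublist f c\<close> m(2) by (metis le_trans sublist_length_le)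
    ultimately show ?thesis unfolding good_def by blast
  next
    case False
    obtain f where "f \<in> F" using assms(4) by blast
    have "m \<le> D + m" by simp
    also have "\<dots> \<le> R" unfolding R_def by simp
    finally have "good u f"
      using False m \<open>f \<in> F\<close> unfolding good_def by auto
    then show ?thesis by blast
  qed
  then have "good u (SOME c. good u c)" for u by (rule someI_ex)
  then show ?thesis
    by (intro that[of "\<lambda>u. SOME c. good u c" R]) (auto simp: good_def)
qed

lemma graph_entropy_real_nonneg:
  assumes S: "finite S" and E: "E \<subseteq> X \<times> S \<times> X"
    and cycle: "y \<in> X" "lpath E y c y" "c \<noteq> []"
  obtains r where "graph_entropy X E = ereal r" "0 \<le> r"
proof -
  have "S \<noteq> {}"
    using lpath_labels_in[OF E cycle(2)] cycle(3) by auto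
  then have "graph_entropy X E \<le> ereal (ln (card S))"
    unfolding graph_entropy_def using entropy_lang_le_ln_card[OF S _ E] by (auto intro!: SUP_least)
  moreover have "0 \<le> graph_entropy X E"
    unfolding graph_entropy_def using entropy_lang_cycle_nonneg[OF S E cycle(2,3)] cycle(1)
    by (auto intro: SUP_upper2[of "(y, y)"])
  ultimately show ?thesis
    using that by (cases "graph_entropy X E") auto
qed

lemma ex_nat_ln_ge:
  obtains M :: nat where "0 < M" "x \<le> ln (real M)"
proof -
  define M where "M = nat \<lceil>exp x\<rceil>"
  have "exp x \<le> real M"
    unfolding M_def by (rule real_nat_ceiling_ge)
  moreover from this have "0 < real M"
    using exp_gt_zero[of x] by linarith
  ultimately show ?thesis
    using that by (simp add: ln_ge_iff)
qed

theorem mainTheorem13: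
  fixes X :: "'v set" and E :: "('v \<times> 'a \<times> 'v) set"
    and Sigma :: "'a set" and F :: "'a list set"
  assumes "finite Sigma"
    and "E \<subseteq> X \<times> Sigma \<times> X"
    and "X \<noteq> {}"
    and "uniformly_connected X E"
    and "deterministic E"
    and "finite F" and "F \<noteq> {}"
    and "\<forall>w\<in>F. w \<noteq> [] \<and> set w \<subseteq> Sigma"
    and "relatively_dense X E F"
  shows "(SUP p \<in> X \<times> X. entropy (avoiding (lang E (fst p) (snd p)) F)) < graph_entropy X E"
proof -
  obtain d R where d: "\<forall>u\<in>X. lpath E u (d u) u" "\<forall>u. \<exists>f\<in>F. sublist f (d u)"
      "\<forall>u. 1 \<le> length (d u)" "\<forall>u. length (d u) \<le> R"
    using detour_cycles_exist[OF assms(4,9,6,7)] assms(8) by blast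
  obtain x0 where "x0 \<in> X" using assms(3) by blast
  moreover have "d x0 \<noteq> []" using d(3) by (metis list.size(3) not_one_le_zero)
  ultimately obtain r where r: "graph_entropy X E = ereal r" "0 \<le> r"
    using graph_entropy_real_nonneg[OF assms(1,2)] d(1) by blast
  obtain M :: nat where M: "0 < M" "(r + 1) * R + 1 \<le> ln (real M)"
    using ex_nat_ln_ge by blast
  define G where "G = M * R"
  have "0 < R" using d(3,4) by (meson le_trans less_one not_le)
  with M(1) have G: "0 < G" by (simp add: G_def)
  have "entropy (avoiding (lang E x y) F) \<le> ereal (r - 1 / (2 * real G))" if "x \<in> X" "y \<in> X" for x y
  proof -
    have "entropy (lang E x y) \<le> ereal r"
      unfolding r(1)[symmetric] graph_entropy_def using that by (auto intro: SUP_upper2[of "(x, y)"])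
    then show ?thesis
      unfolding entropy_eq_limsup_log_growth
      using limsup_log_growth_gap[OF r(2) _ G_def G M(2)
          count_avoiding_mult_power_le[OF assms(1,2,5) that(1) d G_def]] by blast
  qed
  then have "(SUP p \<in> X \<times> X. entropy (avoiding (lang E (fst p) (snd p)) F)) \<le> ereal (r - 1 / (2 * real G))"
    by (auto intro!: SUP_least)
  also have "\<dots> < graph_entropy X E"
    using G r(1) by simp
  finally show ?thesis .
qed

end
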